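(* Let $\gamma\in\,]0,+\infty[$ and let $h\colon\mathbb{R}\to\mathbb{R}\colon v\mapsto\log(1+\exp(-v))$. Then, as $v\to-\infty$, $$\mathrm{prox}_{\gamma h}(v)=v+\gamma\big(1-\exp(\gamma+v)+(1+\gamma)\exp(2(\gamma+v))\big)+o(\exp(2v)),$$ where $o(\exp(2v))$ denotes a function $F$ with $F(v)/\exp(2v)\to0$ as $v\to-\infty$.
   Context: For a convex function $\psi\colon\mathbb{R}\to\mathbb{R}$, $\mathrm{prox}_\psi(v)$ is the unique minimizer over $p\in\mathbb{R}$ of $\frac12(p-v)^2+\psi(p)$. *)

theory Defs
  imports "HOL-Analysis.Analysis"
begin

definition prox :: "(real \<Rightarrow> real) \<Rightarrow> real \<Rightarrow> real" where
  "prox \<psi> v = (THE p. \<forall>q. (1/2) * (p - v)\<^sup>2 + \<psi> p \<le> (1/2) * (q - v)\<^sup>2 + \<psi> q)"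

end

theory Submission
  imports Defs
begin

text \<open>For a differentiable convex \<open>\<psi>\<close>, \<open>prox \<psi> v\<close> is the root \<open>p\<close> of the resolvent equation
  \<open>p + \<psi>' p = v\<close>. For \<open>\<psi> = \<gamma> h\<close> it reads \<open>v = p - \<gamma> / (1 + exp p)\<close>, which expresses \<open>v\<close>
  explicitly through \<open>p = prox \<psi> v\<close>. In the variable \<open>y = exp p\<close> the normalised remainder
  then becomes an explicit function of \<open>y\<close>, whose limit at \<open>y = 0\<close> only needs the derivative
  \<open>\<gamma>\<close> of \<open>exp (\<gamma> y / (1 + y))\<close> at \<open>0\<close>; and \<open>y \<rightarrow> 0\<close> as \<open>v \<rightarrow> -\<infinity>\<close> because \<open>p \<le> v + \<gamma>\<close>.\<close>

lemma prox_eqI: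
  fixes \<psi> \<psi>' :: "real \<Rightarrow> real"
  assumes deriv: "\<And>x. (\<psi> has_real_derivative \<psi>' x) (at x)"
    and mono: "mono \<psi>'"
    and resolvent: "p + \<psi>' p = v"
  shows "prox \<psi> v = p"
proof -
  define F where "F q = (1/2) * (q - v)\<^sup>2 + \<psi> q" for q
  define F' where "F' q = q - v + \<psi>' q" for q
  have F_deriv: "(F has_real_derivative F' q) (at q)" for q
    unfolding F_def F'_def by (auto intro!: derivative_eq_intros deriv)
  have strict_min: "F p < F q" if "q \<noteq> p" for q
  proof -
    obtain z where z: "min p q < z" "z < max p q" "F q - F p = (q - p) * F' z"
    proof (cases "p < q")
      case True
      with MVT2[OF True F_deriv] that show ?thesis by auto
    next
      case False
      with \<open>q \<noteq> p\<close> have "q < p" by simp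
      with MVT2[OF this F_deriv] that show ?thesis by (auto simp: algebra_simps)
    qed
    have "0 \<le> (q - p) * (\<psi>' z - \<psi>' p)"
      using z mono by (cases "p < q") (auto simp: mono_def intro!: mult_nonneg_nonneg mult_nonpos_nonpos)
    moreover have "0 < (q - p) * (z - p)"
      using z by (cases "p < q") (auto intro: mult_pos_pos mult_neg_neg)
    moreover have "F' z = (z - p) + (\<psi>' z - \<psi>' p)"
      using resolvent unfolding F'_def by simp
    ultimately have "0 < (q - p) * F' z" by (simp add: distrib_left)
    with z show ?thesis by simp
  qed
  show ?thesis
    unfolding prox_def
  proof (rule the_equality)
    show "\<forall>q. (1/2) * (p - v)\<^sup>2 + \<psi> p \<le> (1/2) * (q - v)\<^sup>2 + \<psi> q"
      using strict_min unfolding F_def by (metis less_imp_le order_refl)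
  next
    fix p' assume "\<forall>q. (1/2) * (p' - v)\<^sup>2 + \<psi> p' \<le> (1/2) * (q - v)\<^sup>2 + \<psi> q"
    then have "F p' \<le> F p" unfolding F_def by blast
    then show "p' = p" using strict_min[of p'] by fastforce
  qed
qed

lemma has_real_derivative_scaled_logistic_loss:
  "((\<lambda>x. \<gamma> * ln (1 + exp (- x))) has_real_derivative - \<gamma> / (1 + exp x)) (at x)"
proof -
  have "((\<lambda>x. \<gamma> * ln (1 + exp (- x))) has_real_derivative
          \<gamma> * (- exp (- x) / (1 + exp (- x)))) (at x)"
    by (auto intro!: derivative_eq_intros simp: add_pos_pos)
  moreover have "exp (- x) / (1 + exp (- x)) = 1 / (1 + exp x)"
    by (simp add: exp_minus field_simps add_pos_pos)
  ultimately show ?thesis by simp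
qed

lemma prox_scaled_logistic_loss:
  fixes \<gamma> p :: real
  assumes "\<gamma> \<ge> 0"
  shows "prox (\<lambda>x. \<gamma> * ln (1 + exp (- x))) (p - \<gamma> / (1 + exp p)) = p"
proof (rule prox_eqI[OF has_real_derivative_scaled_logistic_loss])
  show "mono (\<lambda>x. - \<gamma> / (1 + exp x))"
    using assms by (auto simp: mono_def intro!: divide_left_mono mult_pos_pos add_pos_pos)
qed simp

lemma logistic_resolvent_root:
  fixes \<gamma> v :: real
  assumes "\<gamma> \<ge> 0"
  shows "\<exists>p. p \<le> v + \<gamma> \<and> p - \<gamma> / (1 + exp p) = v"
proof -
  have "\<exists>p \<ge> v. p \<le> v + \<gamma> \<and> p - \<gamma> / (1 + exp p) = v"
  proof (rule IVT')
    show "v - \<gamma> / (1 + exp v) \<le> v"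
      using assms by (simp add: add_pos_pos)
    have "\<gamma> / (1 + exp (v + \<gamma>)) \<le> \<gamma>"
      using assms by (simp add: divide_le_eq add_pos_pos distrib_left)
    then show "v \<le> v + \<gamma> - \<gamma> / (1 + exp (v + \<gamma>))" by simp
    show "continuous_on {v..v + \<gamma>} (\<lambda>p. p - \<gamma> / (1 + exp p))"
      by (intro continuous_intros) (smt (verit) exp_gt_zero)
  qed (use assms in simp)
  then show ?thesis by blast
qed

definition logistic_remainder :: "real \<Rightarrow> real \<Rightarrow> real" where
  "logistic_remainder \<gamma> y = exp (2 * \<gamma> / (1 + y)) *
     (\<gamma> * ((exp (\<gamma> * y / (1 + y)) - 1) / y + 1 / (1 + y))
      - \<gamma> * (1 + \<gamma>) * (exp (\<gamma> * y / (1 + y)))\<^sup>2)"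

lemma logistic_remainder_eq:
  fixes \<gamma> p :: real
  defines "v \<equiv> p - \<gamma> / (1 + exp p)"
  shows "(p - (v + \<gamma> * (1 - exp (\<gamma> + v) + (1 + \<gamma>) * exp (2 * (\<gamma> + v))))) / exp (2 * v)
         = logistic_remainder \<gamma> (exp p)"
proof -
  define y where "y = exp p"
  define E where "E = exp (\<gamma> * y / (1 + y))"
  have y_pos: "y > 0" unfolding y_def by simp
  then have "\<gamma> + v = p + \<gamma> * y / (1 + y)"
    unfolding v_def y_def[symmetric] by (simp add: field_simps)
  then have exp_\<gamma>v: "exp (\<gamma> + v) = y * E"
    unfolding E_def y_def by (simp add: exp_add)
  have exp_2v: "exp (2 * v) = y\<^sup>2 / exp (2 * \<gamma> / (1 + y))"
    unfolding v_def y_def by (simp add: exp_diff exp_double)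
  have exp_2\<gamma>v: "exp (2 * (\<gamma> + v)) = (y * E)\<^sup>2"
    by (simp only: exp_double exp_\<gamma>v)
  have p_eq: "p = v + \<gamma> / (1 + y)" unfolding v_def y_def by simp
  have "p - (v + \<gamma> * (1 - y * E + (1 + \<gamma>) * (y * E)\<^sup>2))
      = y\<^sup>2 * (\<gamma> * ((E - 1) / y + 1 / (1 + y)) - \<gamma> * (1 + \<gamma>) * E\<^sup>2)"
    unfolding p_eq using y_pos
    by (simp add: field_simps power2_eq_square add_pos_pos[THEN less_imp_neq[symmetric]])
  then show ?thesis
    unfolding logistic_remainder_def y_def[symmetric] E_def[symmetric] exp_\<gamma>v exp_2v exp_2\<gamma>v
    using y_pos by simp
qed

lemma logistic_remainder_tendsto_zero:
  "(logistic_remainder \<gamma> \<longlongrightarrow> 0) (at 0)"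
proof -
  have "((\<lambda>y. exp (\<gamma> * y / (1 + y))) has_real_derivative \<gamma>) (at 0)"
    by (auto intro!: derivative_eq_intros)
  then have difference_quotient: "((\<lambda>y. (exp (\<gamma> * y / (1 + y)) - 1) / y) \<longlongrightarrow> \<gamma>) (at 0)"
    by (simp add: DERIV_def)
  have "(logistic_remainder \<gamma> \<longlongrightarrow> exp (2 * \<gamma> / (1 + 0)) *
          (\<gamma> * (\<gamma> + 1 / (1 + 0)) - \<gamma> * (1 + \<gamma>) * (exp (\<gamma> * 0 / (1 + 0)))\<^sup>2)) (at 0)"
    unfolding logistic_remainder_def
    by (intro tendsto_intros difference_quotient) auto
  then show ?thesis by (simp add: algebra_simps)
qed

theorem proposition3:
  fixes \<gamma> :: real and h :: "real \<Rightarrow> real"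
  assumes "\<gamma> > 0"
    and "\<And>v. h v = ln (1 + exp (- v))"
  shows "((\<lambda>v. (prox (\<lambda>x. \<gamma> * h x) v
             - (v + \<gamma> * (1 - exp (\<gamma> + v) + (1 + \<gamma>) * exp (2 * (\<gamma> + v)))))
           / exp (2 * v)) \<longlongrightarrow> 0) at_bot"
proof -
  define P where "P = prox (\<lambda>x. \<gamma> * h x)"
  have P_resolvent: "P v - \<gamma> / (1 + exp (P v)) = v" and P_le: "P v \<le> v + \<gamma>" for v
  proof -
    obtain p where p: "p \<le> v + \<gamma>" "p - \<gamma> / (1 + exp p) = v"
      using logistic_resolvent_root \<open>\<gamma> > 0\<close> by (meson less_imp_le)
    have "P v = p"
      unfolding P_def assms(2) using prox_scaled_logistic_loss[of \<gamma> p] \<open>\<gamma> > 0\<close> p(2) by simp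
    with p show "P v - \<gamma> / (1 + exp (P v)) = v" "P v \<le> v + \<gamma>" by simp_all
  qed
  have "filterlim P at_bot at_bot"
    unfolding filterlim_at_bot eventually_at_bot_linorder
    using P_le by (metis add_le_cancel_right diff_add_cancel order_trans)
  then have "((\<lambda>v. exp (P v)) \<longlongrightarrow> 0) at_bot"
    by (rule filterlim_compose[OF exp_at_bot])
  then have "filterlim (\<lambda>v. exp (P v)) (at 0) at_bot"
    by (simp add: filterlim_at)
  from filterlim_compose[OF logistic_remainder_tendsto_zero this]
  show ?thesis
    unfolding P_def[symmetric] using logistic_remainder_eq[of "P _" \<gamma>] by (simp add: P_resolvent)
qed

end
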